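(* $\mathbf{T}^{\nabla\bullet}$ is sound and strongly complete with respect to the class of reflexive frames: for every set $\Gamma\cup\{\phi\}\subseteq\mathcal{L}(\nabla,\bullet)$, $\Gamma\vdash_{\mathbf{T}^{\nabla\bullet}}\phi$ iff for every Kripke model $\mathcal{M}$ with reflexive accessibility relation and every state $s$, $\mathcal{M},s\vDash\Gamma$ implies $\mathcal{M},s\vDash\phi$.
   Context: $\mathcal{L}(\nabla,\bullet)$: $\phi::=p\mid\neg\phi\mid\phi\land\phi\mid\nabla\phi\mid\bullet\phi$ over a nonempty set $\mathbf{P}$ of propositional variables; $\Delta\phi:=\neg\nabla\phi$, $\circ\phi:=\neg\bullet\phi$. Kripke models $\langle S,R,V\rangle$: $s\vDash\nabla\phi$ iff there are $t,u$ with $sRt$, $sRu$, $t\vDash\phi$, $u\nvDash\phi$; $s\vDash\bullet\phi$ iff $s\vDash\phi$ and there is $t$ with $sRt$, $t\nvDash\phi$. The Hilbert system $\mathbf{K}^{\nabla\bullet}$ has axioms: A0 all propositional tautologies; A1 $\bullet\phi\to\phi$; A2 $\nabla\phi\leftrightarrow\nabla\neg\phi$; A3 $\bullet(\psi\to\phi)\land\phi\to\bullet\phi$; A4 $\nabla(\phi\land\psi)\to\nabla\phi\vee\nabla\psi$; A5 $\bullet(\phi\land\psi)\to\bullet\phi\vee\bullet\psi$; A6 $\nabla\phi\to\bullet\phi\vee\bullet\neg\phi$; A7 $\bullet(\phi\to\psi)\land\bullet(\neg\phi\to\chi)\to\nabla\phi$; rules R1 $\phi/\Delta\phi$; R2 $\phi/\circ\phi$;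 R3 $\phi\leftrightarrow\psi/\Delta\phi\leftrightarrow\Delta\psi$; R4 $\phi\leftrightarrow\psi/\circ\phi\leftrightarrow\circ\psi$; MP. $\mathbf{T}^{\nabla\bullet}$ is $\mathbf{K}^{\nabla\bullet}$ plus the axiom schema AT: $\Delta\phi\land\phi\to\circ(\psi\to\phi)$. $\Gamma\vdash\phi$ means $\vdash(\gamma_1\land\dots\land\gamma_n)\to\phi$ for some finite subset of $\Gamma$. *)

theory Defs
  imports Main
begin

datatype 'p fm =
    Atom 'p
  | Neg "'p fm"
  | Conj "'p fm" "'p fm"
  | Nabla "'p fm"
  | Bullet "'p fm"

definition Imp :: "'p fm \<Rightarrow> 'p fm \<Rightarrow> 'p fm" where
  "Imp a b = Neg (Conj a (Neg b))"

definition Disj :: "'p fm \<Rightarrow> 'p fm \<Rightarrow> 'p fm" where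
  "Disj a b = Neg (Conj (Neg a) (Neg b))"

definition Iff :: "'p fm \<Rightarrow> 'p fm \<Rightarrow> 'p fm" where
  "Iff a b = Conj (Imp a b) (Imp b a)"

definition Delta :: "'p fm \<Rightarrow> 'p fm" where
  "Delta a = Neg (Nabla a)"

definition Circ :: "'p fm \<Rightarrow> 'p fm" where
  "Circ a = Neg (Bullet a)"

fun peval :: "('p fm \<Rightarrow> bool) \<Rightarrow> 'p fm \<Rightarrow> bool" where
  "peval v (Atom p) = v (Atom p)"
| "peval v (Neg a) = (\<not> peval v a)"
| "peval v (Conj a b) = (peval v a \<and> peval v b)"
| "peval v (Nabla a) = v (Nabla a)"
| "peval v (Bullet a) = v (Bullet a)"

definition tautology :: "'p fm \<Rightarrow> bool" where
  "tautology a = (\<forall>v. peval v a)"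

inductive thmT :: "'p fm \<Rightarrow> bool" where
  A0: "tautology a \<Longrightarrow> thmT a"
| A1: "thmT (Imp (Bullet a) a)"
| A2: "thmT (Iff (Nabla a) (Nabla (Neg a)))"
| A3: "thmT (Imp (Conj (Bullet (Imp b a)) a) (Bullet a))"
| A4: "thmT (Imp (Nabla (Conj a b)) (Disj (Nabla a) (Nabla b)))"
| A5: "thmT (Imp (Bullet (Conj a b)) (Disj (Bullet a) (Bullet b)))"
| A6: "thmT (Imp (Nabla a) (Disj (Bullet a) (Bullet (Neg a))))"
| A7: "thmT (Imp (Conj (Bullet (Imp a b)) (Bullet (Imp (Neg a) c))) (Nabla a))"
| AT: "thmT (Imp (Conj (Delta a) a) (Circ (Imp b a)))"
| R1: "thmT a \<Longrightarrow> thmT (Delta a)"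
| R2: "thmT a \<Longrightarrow> thmT (Circ a)"
| R3: "thmT (Iff a b) \<Longrightarrow> thmT (Iff (Delta a) (Delta b))"
| R4: "thmT (Iff a b) \<Longrightarrow> thmT (Iff (Circ a) (Circ b))"
| MP: "thmT (Imp a b) \<Longrightarrow> thmT a \<Longrightarrow> thmT b"

fun Conjs :: "'p fm list \<Rightarrow> 'p fm" where
  "Conjs [] = undefined"
| "Conjs [a] = a"
| "Conjs (a # as) = Conj a (Conjs as)"

text \<open>Gamma |- phi: for some finite subset {g1..gn} of Gamma, |- (g1 & ... & gn) --> phi
  (for n = 0 this reads |- phi).\<close>
definition derivesT :: "'p fm set \<Rightarrow> 'p fm \<Rightarrow> bool" where
  "derivesT \<Gamma> a = (thmT a \<or> (\<exists>xs. xs \<noteq> [] \<and> set xs \<subseteq> \<Gamma> \<and> thmT (Imp (Conjs xs) a)))"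

text \<open>A Kripke model is given by a set of states W, an accessibility relation R and a
  valuation V; only R-successors inside W are considered.\<close>
fun sat :: "'s set \<Rightarrow> ('s \<Rightarrow> 's \<Rightarrow> bool) \<Rightarrow> ('p \<Rightarrow> 's set) \<Rightarrow> 's \<Rightarrow> 'p fm \<Rightarrow> bool" where
  "sat W R V s (Atom p) = (s \<in> V p)"
| "sat W R V s (Neg a) = (\<not> sat W R V s a)"
| "sat W R V s (Conj a b) = (sat W R V s a \<and> sat W R V s b)"
| "sat W R V s (Nabla a) =
     ((\<exists>t\<in>W. R s t \<and> sat W R V t a) \<and> (\<exists>u\<in>W. R s u \<and> \<not> sat W R V u a))"
| "sat W R V s (Bullet a) = (sat W R V s a \<and> (\<exists>t\<in>W. R s t \<and> \<not> sat W R V t a))"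

definition reflexive_frame :: "'s set \<Rightarrow> ('s \<Rightarrow> 's \<Rightarrow> bool) \<Rightarrow> bool" where
  "reflexive_frame W R = (\<forall>s\<in>W. R s s)"

definition refl_consequence :: "'s itself \<Rightarrow> 'p fm set \<Rightarrow> 'p fm \<Rightarrow> bool" where
  "refl_consequence _ \<Gamma> a =
     (\<forall>(W::'s set) R (V::'p \<Rightarrow> 's set). reflexive_frame W R \<longrightarrow>
        (\<forall>s\<in>W. (\<forall>g\<in>\<Gamma>. sat W R V s g) \<longrightarrow> sat W R V s a))"

end

theory Submission
  imports Defs
begin

text \<open>
  Soundness is a routine check of every axiom and rule on reflexive models; AT is exactly where
  reflexivity enters.

  For completeness, put \<open>\<box>a := a \<and> \<Delta>a\<close>. This operator is a normal box: necessitation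
  is R1, and monotonicity (hence K) follows from AT together with R3.
  Inside a maximal consistent set both primitive operators are determined by \<open>\<box>\<close>:
  \<open>\<nabla>a\<close> holds iff neither \<open>\<box>a\<close> nor \<open>\<box>\<not>a\<close> does (by A2), and \<open>\<bullet>a\<close> holds iff \<open>a\<close> holds
  but \<open>\<box>a\<close> does not (by A1, A6 and \<open>\<bullet>a \<rightarrow> \<nabla>a\<close>). Hence the canonical model whose states
  are the maximal consistent sets, with \<open>M R N\<close> iff \<open>N\<close> contains every \<open>a\<close> with \<open>\<box>a \<in> M\<close>,
  satisfies the truth lemma, and it is reflexive because \<open>\<box>a \<rightarrow> a\<close>.
\<close>

lemmas fm_abbrev_defs = Imp_def Disj_def Iff_def Delta_def Circ_def

definition Top :: "'p fm" where
  "Top = Imp (Atom undefined) (Atom undefined)"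

definition Bot :: "'p fm" where
  "Bot = Neg Top"

definition Box :: "'p fm \<Rightarrow> 'p fm" where
  "Box a = Conj a (Delta a)"

text \<open>Unlike \<open>Conjs\<close>, this conjunction is also meaningful for the empty list.\<close>
fun Conj_list :: "'p fm list \<Rightarrow> 'p fm" where
  "Conj_list [] = Top"
| "Conj_list (a # as) = Conj a (Conj_list as)"

lemma peval_Top [simp]: "peval v Top"
  by (simp add: Top_def Imp_def)

lemma peval_Bot [simp]: "\<not> peval v Bot"
  by (simp add: Bot_def)

lemma peval_Conj_list: "peval v (Conj_list as) \<longleftrightarrow> (\<forall>a\<in>set as. peval v a)"
  by (induction as) auto

lemma peval_Conjs: "as \<noteq> [] \<Longrightarrow> peval v (Conjs as) \<longleftrightarrow> (\<forall>a\<in>set as. peval v a)"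
  by (induction as rule: Conjs.induct) auto

lemma thmT_taut: "(\<And>v. peval v a) \<Longrightarrow> thmT a"
  by (rule A0) (simp add: tautology_def)

lemma thmT_taut_consequence1:
  "thmT a \<Longrightarrow> (\<And>v. peval v a \<Longrightarrow> peval v c) \<Longrightarrow> thmT c"
  by (rule MP[of a c]) (auto intro!: thmT_taut simp: Imp_def)

lemma thmT_taut_consequence2:
  "thmT a \<Longrightarrow> thmT b \<Longrightarrow> (\<And>v. peval v a \<Longrightarrow> peval v b \<Longrightarrow> peval v c) \<Longrightarrow> thmT c"
  by (rule MP[of b c], rule MP[of a "Imp b c"]) (auto intro!: thmT_taut simp: Imp_def)

lemma thmT_taut_consequence3:
  "thmT a \<Longrightarrow> thmT b \<Longrightarrow> thmT d \<Longrightarrow>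
    (\<And>v. peval v a \<Longrightarrow> peval v b \<Longrightarrow> peval v d \<Longrightarrow> peval v c) \<Longrightarrow> thmT c"
  by (rule MP[of d c], rule thmT_taut_consequence2[of a b "Imp d c"]) (auto simp: Imp_def)

subsection \<open>The derived box\<close>

lemma thmT_Bullet_imp_Nabla: "thmT (Imp (Bullet a) (Nabla a))"
proof -
  txt \<open>AT with \<open>\<psi> = \<top>\<close> yields \<open>\<Delta>a \<and> a \<rightarrow> \<circ>a\<close>.\<close>
  have "thmT (Iff (Imp Top a) a)"
    by (rule thmT_taut) (simp add: fm_abbrev_defs)
  then have "thmT (Iff (Circ (Imp Top a)) (Circ a))"
    by (rule R4)
  then show ?thesis
    by (rule thmT_taut_consequence3[OF _ AT[of a Top] A1[of a]])
      (simp add: fm_abbrev_defs; blast)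
qed

lemma thmT_Nabla_Conj_imp_Bullet: "thmT (Imp (Conj (Nabla a) a) (Bullet a))"
  by (rule thmT_taut_consequence2[OF A6[of a] A1[of "Neg a"]]) (simp add: fm_abbrev_defs; blast)

lemma thmT_Box_nec: "thmT a \<Longrightarrow> thmT (Box a)"
  by (rule thmT_taut_consequence2[OF _ R1[of a]]) (auto simp: Box_def)

lemma thmT_Box_Conj: "thmT (Imp (Conj (Box a) (Box b)) (Box (Conj a b)))"
  by (rule thmT_taut_consequence1[OF A4[of a b]]) (simp add: fm_abbrev_defs Box_def; blast)

lemma thmT_Box_mono:
  assumes imp: "thmT (Imp a c)"
  shows "thmT (Imp (Box a) (Box c))"
proof -
  txt \<open>Given \<open>a \<rightarrow> c\<close>, the formula \<open>\<not>c \<rightarrow> a\<close> is equivalent to \<open>c\<close>, and AT transfers \<open>\<Delta>a\<close> to it.\<close>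
  have "thmT (Imp (Box a) (Delta (Imp (Neg c) a)))"
    using AT[of a "Neg c"] thmT_Nabla_Conj_imp_Bullet[of "Imp (Neg c) a"]
    by (rule thmT_taut_consequence2)
      (simp add: fm_abbrev_defs Box_def; blast)
  moreover have "thmT (Iff (Imp (Neg c) a) c)"
    by (rule thmT_taut_consequence1[OF imp]) (simp add: fm_abbrev_defs; blast)
  then have "thmT (Iff (Delta (Imp (Neg c) a)) (Delta c))"
    by (rule R3)
  ultimately show ?thesis
    by (rule thmT_taut_consequence3[OF _ _ imp]) (simp add: fm_abbrev_defs Box_def; blast)
qed

lemma thmT_Box_K: "thmT (Imp (Conj (Box (Imp a b)) (Box a)) (Box b))"
proof -
  have "thmT (Imp (Box (Conj (Imp a b) a)) (Box b))"
    by (rule thmT_Box_mono, rule thmT_taut) (simp add: fm_abbrev_defs)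
  then show ?thesis
    by (rule thmT_taut_consequence2[OF thmT_Box_Conj[of "Imp a b" a]])
      (simp add: fm_abbrev_defs Box_def; blast)
qed

lemma thmT_Box_Conj_list:
  "thmT (Imp (Conj_list as) b) \<Longrightarrow> thmT (Imp (Conj_list (map Box as)) (Box b))"
proof (induction as arbitrary: b)
  case Nil
  then have "thmT b"
    by (rule thmT_taut_consequence1) (simp add: fm_abbrev_defs)
  then have "thmT (Box b)"
    by (rule thmT_Box_nec)
  then show ?case
    by (rule thmT_taut_consequence1) (simp add: fm_abbrev_defs)
next
  case (Cons a as)
  have "thmT (Imp (Conj_list as) (Imp a b))"
    using Cons.prems by (rule thmT_taut_consequence1) (simp add: fm_abbrev_defs)
  then have "thmT (Imp (Conj_list (map Box as)) (Box (Imp a b)))"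
    by (rule Cons.IH)
  then show ?case
    by (rule thmT_taut_consequence2[OF _ thmT_Box_K]) (simp add: fm_abbrev_defs; blast)
qed

definition derives :: "'p fm set \<Rightarrow> 'p fm \<Rightarrow> bool" where
  "derives S a \<longleftrightarrow> (\<exists>as. set as \<subseteq> S \<and> thmT (Imp (Conj_list as) a))"

lemma derivesT_iff_derives: "derivesT \<Gamma> a \<longleftrightarrow> derives \<Gamma> a"
proof
  assume "derivesT \<Gamma> a"
  then consider "thmT a" | as where "as \<noteq> []" "set as \<subseteq> \<Gamma>" "thmT (Imp (Conjs as) a)"
    unfolding derivesT_def by blast
  then show "derives \<Gamma> a"
  proof cases
    case 1
    then have "thmT (Imp (Conj_list []) a)"
      by (rule thmT_taut_consequence1) (simp add: fm_abbrev_defs)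
    then show ?thesis
      unfolding derives_def by (intro exI[of _ "[]"]) simp
  next
    case (2 as)
    from 2(3) have "thmT (Imp (Conj_list as) a)"
      by (rule thmT_taut_consequence1)
        (simp add: fm_abbrev_defs peval_Conj_list peval_Conjs[OF 2(1)])
    then show ?thesis
      using 2(2) unfolding derives_def by blast
  qed
next
  assume "derives \<Gamma> a"
  then obtain as where as: "set as \<subseteq> \<Gamma>" "thmT (Imp (Conj_list as) a)"
    unfolding derives_def by blast
  show "derivesT \<Gamma> a"
  proof (cases "as = []")
    case True
    with as(2) have "thmT a"
      by (auto elim!: thmT_taut_consequence1 simp: fm_abbrev_defs)
    then show ?thesis
      by (simp add: derivesT_def)
  next
    case False
    from as(2) have "thmT (Imp (Conjs as) a)"
      by (rule thmT_taut_consequence1)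
        (simp add: fm_abbrev_defs peval_Conj_list peval_Conjs[OF False])
    then show ?thesis
      using as(1) False unfolding derivesT_def by blast
  qed
qed

lemma derives_member: "a \<in> S \<Longrightarrow> derives S a"
  unfolding derives_def
  by (rule exI[of _ "[a]"]) (auto intro!: thmT_taut simp: fm_abbrev_defs)

lemma derives_thmT: "thmT a \<Longrightarrow> derives S a"
  unfolding derives_def
  by (rule exI[of _ "[]"]) (auto elim!: thmT_taut_consequence1 simp: fm_abbrev_defs)

lemma derives_taut_consequence:
  assumes "derives S a" "derives S b" "\<And>v. peval v a \<Longrightarrow> peval v b \<Longrightarrow> peval v c"
  shows "derives S c"
proof -
  obtain as bs where
    as: "set as \<subseteq> S" "thmT (Imp (Conj_list as) a)" and
    bs: "set bs \<subseteq> S" "thmT (Imp (Conj_list bs) b)"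
    using assms(1,2) unfolding derives_def by blast
  have "thmT (Imp (Conj_list (as @ bs)) c)"
    by (rule thmT_taut_consequence2[OF as(2) bs(2)])
      (auto simp: fm_abbrev_defs peval_Conj_list assms(3))
  then show ?thesis
    using as bs unfolding derives_def by (intro exI[of _ "as @ bs"]) auto
qed

lemma derives_taut_consequence1:
  "derives S a \<Longrightarrow> (\<And>v. peval v a \<Longrightarrow> peval v c) \<Longrightarrow> derives S c"
  using derives_taut_consequence[of S a a c] by blast

lemma derives_deduction: "derives (insert a S) b \<Longrightarrow> derives S (Imp a b)"
proof -
  assume "derives (insert a S) b"
  then obtain as where as: "set as \<subseteq> insert a S" "thmT (Imp (Conj_list as) b)"
    unfolding derives_def by blast
  have "thmT (Imp (Conj_list (removeAll a as)) (Imp a b))"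
    by (rule thmT_taut_consequence1[OF as(2)]) (auto simp: fm_abbrev_defs peval_Conj_list)
  then show ?thesis
    using as(1) unfolding derives_def by (intro exI[of _ "removeAll a as"]) auto
qed

lemma derives_by_contradiction: "derives (insert (Neg a) S) Bot \<Longrightarrow> derives S a"
  by (drule derives_deduction, erule derives_taut_consequence1) (auto simp: fm_abbrev_defs)

subsection \<open>Maximal consistent sets\<close>

definition consistent :: "'p fm set \<Rightarrow> bool" where
  "consistent S \<longleftrightarrow> \<not> derives S Bot"

definition max_consistent :: "'p fm set \<Rightarrow> bool" where
  "max_consistent M \<longleftrightarrow> consistent M \<and> (\<forall>a. consistent (insert a M) \<longrightarrow> a \<in> M)"

lemma consistent_Union_chain:
  assumes "C \<noteq> {}" "subset.chain {S. consistent S} C"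
  shows "consistent (\<Union>C)"
  unfolding consistent_def
proof
  assume "derives (\<Union>C) Bot"
  then obtain as where as: "set as \<subseteq> \<Union>C" "thmT (Imp (Conj_list as) Bot)"
    unfolding derives_def by blast
  obtain S where "S \<in> C" "set as \<subseteq> S"
    using finite_subset_Union_chain[OF _ as(1) assms] by blast
  with as(2) have "derives S Bot"
    unfolding derives_def by blast
  with \<open>S \<in> C\<close> assms(2) show False
    unfolding subset.chain_def consistent_def by blast
qed

lemma Lindenbaum:
  assumes "consistent S"
  obtains M where "S \<subseteq> M" "max_consistent M"
proof -
  let ?A = "{T. S \<subseteq> T \<and> consistent T}"
  have "\<forall>C\<in>chains ?A. \<exists>U\<in>?A. \<forall>T\<in>C. T \<subseteq> U"
  proof
    fix C
    assume C: "C \<in> chains ?A"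
    show "\<exists>U\<in>?A. \<forall>T\<in>C. T \<subseteq> U"
    proof (cases "C = {}")
      case True
      with assms show ?thesis by auto
    next
      case False
      have "subset.chain {S. consistent S} C"
        using C unfolding chains_alt_def subset.chain_def by blast
      then have "consistent (\<Union>C)"
        by (rule consistent_Union_chain[OF False])
      moreover have "S \<subseteq> \<Union>C"
        using False C unfolding chains_def by auto
      ultimately show ?thesis by auto
    qed
  qed
  then obtain M where M: "M \<in> ?A" "\<forall>T\<in>?A. M \<subseteq> T \<longrightarrow> T = M"
    by (blast dest: Zorn_Lemma2)
  have "max_consistent M"
    unfolding max_consistent_def
  proof (intro conjI allI impI)
    show "consistent M"
      using M(1) by blast
    fix a
    assume "consistent (insert a M)"
    with M have "insert a M = M"
      by blast
    then show "a \<in> M"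
      by blast
  qed
  with M(1) show thesis
    using that by blast
qed

lemma max_consistent_derives:
  assumes "max_consistent M" "derives M a"
  shows "a \<in> M"
proof -
  have "consistent (insert a M)"
  proof (unfold consistent_def, rule notI)
    assume "derives (insert a M) Bot"
    then have "derives M (Imp a Bot)"
      by (rule derives_deduction)
    then have "derives M Bot"
      by (rule derives_taut_consequence[OF assms(2)]) (simp add: Imp_def)
    with assms(1) show False
      unfolding max_consistent_def consistent_def by blast
  qed
  with assms(1) show ?thesis
    unfolding max_consistent_def by blast
qed

lemma max_consistent_MP:
  assumes "max_consistent M" "thmT (Imp a b)" "a \<in> M"
  shows "b \<in> M"
proof -
  have "derives M b"
    by (rule derives_taut_consequence[OF derives_thmT[OF assms(2)] derives_member[OF assms(3)]])
      (simp add: Imp_def)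
  with assms(1) show ?thesis
    by (rule max_consistent_derives)
qed

lemma max_consistent_Neg:
  assumes M: "max_consistent M"
  shows "Neg a \<in> M \<longleftrightarrow> a \<notin> M"
proof
  assume "Neg a \<in> M"
  show "a \<notin> M"
  proof
    assume "a \<in> M"
    with \<open>Neg a \<in> M\<close> have "derives M Bot"
      by (intro derives_taut_consequence[OF derives_member[of "Neg a"] derives_member[of a]]) auto
    with M show False
      unfolding max_consistent_def consistent_def by blast
  qed
next
  assume "a \<notin> M"
  with M have "derives (insert a M) Bot"
    unfolding max_consistent_def consistent_def by blast
  then have "derives M (Imp a Bot)"
    by (rule derives_deduction)
  then have "derives M (Neg a)"
    by (rule derives_taut_consequence1) (simp add: Imp_def)
  with M show "Neg a \<in> M"
    by (rule max_consistent_derives)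
qed

lemma max_consistent_Conj:
  assumes M: "max_consistent M"
  shows "Conj a b \<in> M \<longleftrightarrow> a \<in> M \<and> b \<in> M"
proof
  assume "Conj a b \<in> M"
  then have "derives M a" "derives M b"
    by (rule derives_taut_consequence1[OF derives_member]; simp)+
  with M show "a \<in> M \<and> b \<in> M"
    by (simp add: max_consistent_derives)
next
  assume "a \<in> M \<and> b \<in> M"
  then have "derives M (Conj a b)"
    by (intro derives_taut_consequence[OF derives_member[of a] derives_member[of b]]) auto
  with M show "Conj a b \<in> M"
    by (simp add: max_consistent_derives)
qed

lemma max_consistent_Box: "max_consistent M \<Longrightarrow> Box a \<in> M \<longleftrightarrow> a \<in> M \<and> Nabla a \<notin> M"
  by (simp add: Box_def Delta_def max_consistent_Conj max_consistent_Neg)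

lemma max_consistent_Nabla_Neg:
  assumes M: "max_consistent M"
  shows "Nabla (Neg a) \<in> M \<longleftrightarrow> Nabla a \<in> M"
proof -
  have "thmT (Imp (Nabla a) (Nabla (Neg a)))" "thmT (Imp (Nabla (Neg a)) (Nabla a))"
    using A2[of a] by (rule thmT_taut_consequence1; simp add: fm_abbrev_defs)+
  then show ?thesis
    using max_consistent_MP[OF M] by blast
qed

lemma max_consistent_Bullet:
  assumes M: "max_consistent M"
  shows "Bullet a \<in> M \<longleftrightarrow> a \<in> M \<and> Nabla a \<in> M"
  using max_consistent_MP[OF M A1] max_consistent_MP[OF M thmT_Bullet_imp_Nabla]
    max_consistent_MP[OF M thmT_Nabla_Conj_imp_Bullet] max_consistent_Conj[OF M]
  by blast

subsection \<open>The canonical model\<close>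

definition canonical_states :: "'p fm set set" where
  "canonical_states = {M. max_consistent M}"

definition canonical_rel :: "'p fm set \<Rightarrow> 'p fm set \<Rightarrow> bool" where
  "canonical_rel M N \<longleftrightarrow> (\<forall>a. Box a \<in> M \<longrightarrow> a \<in> N)"

definition canonical_val :: "'p \<Rightarrow> 'p fm set set" where
  "canonical_val p = {M. Atom p \<in> M}"

lemma canonical_successor_witness:
  assumes M: "max_consistent M" and "Box a \<notin> M"
  obtains N where "max_consistent N" "canonical_rel M N" "a \<notin> N"
proof -
  let ?B = "{b. Box b \<in> M}"
  have "consistent (insert (Neg a) ?B)"
  proof (unfold consistent_def, rule notI)
    assume "derives (insert (Neg a) ?B) Bot"
    then have "derives ?B a"
      by (rule derives_by_contradiction)
    then obtain bs where bs: "set bs \<subseteq> ?B" "thmT (Imp (Conj_list bs) a)"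
      unfolding derives_def by blast
    from bs(2) have "thmT (Imp (Conj_list (map Box bs)) (Box a))"
      by (rule thmT_Box_Conj_list)
    moreover have "set (map Box bs) \<subseteq> M"
      using bs(1) by auto
    ultimately have "derives M (Box a)"
      unfolding derives_def by blast
    with \<open>Box a \<notin> M\<close> show False
      using max_consistent_derives[OF M] by blast
  qed
  then obtain N where N: "insert (Neg a) ?B \<subseteq> N" "max_consistent N"
    by (rule Lindenbaum)
  then have "canonical_rel M N" "a \<notin> N"
    using max_consistent_Neg unfolding canonical_rel_def by blast+
  with N(2) show thesis
    by (rule that)
qed

lemma canonical_Box:
  assumes M: "max_consistent M"
  shows "Box a \<in> M \<longleftrightarrow> (\<forall>N\<in>canonical_states. canonical_rel M N \<longrightarrow> a \<in> N)"
proof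
  show "\<forall>N\<in>canonical_states. canonical_rel M N \<longrightarrow> a \<in> N" if "Box a \<in> M"
    using that unfolding canonical_rel_def by blast
next
  assume all: "\<forall>N\<in>canonical_states. canonical_rel M N \<longrightarrow> a \<in> N"
  show "Box a \<in> M"
  proof (rule ccontr)
    assume "Box a \<notin> M"
    then obtain N where "max_consistent N" "canonical_rel M N" "a \<notin> N"
      by (rule canonical_successor_witness[OF M])
    with all show False
      unfolding canonical_states_def by blast
  qed
qed

lemma canonical_reflexive: "reflexive_frame canonical_states canonical_rel"
  unfolding reflexive_frame_def canonical_states_def canonical_rel_def
  by (auto simp: max_consistent_Box)

lemma truth_lemma:
  "max_consistent M \<Longrightarrow> sat canonical_states canonical_rel canonical_val M a \<longleftrightarrow> a \<in> M"
proof (induction a arbitrary: M)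
  case (Atom p)
  then show ?case by (simp add: canonical_val_def)
next
  case (Neg a)
  then show ?case by (simp add: max_consistent_Neg)
next
  case (Conj a b)
  then show ?case by (simp add: max_consistent_Conj)
next
  case (Nabla a)
  note M = Nabla.prems
  have "sat canonical_states canonical_rel canonical_val M (Nabla a) \<longleftrightarrow>
      Box a \<notin> M \<and> Box (Neg a) \<notin> M"
    using Nabla.IH canonical_Box[OF M, of a] canonical_Box[OF M, of "Neg a"]
      max_consistent_Neg
    by (auto simp: canonical_states_def)
  also have "\<dots> \<longleftrightarrow> Nabla a \<in> M"
    using max_consistent_Box[OF M] max_consistent_Nabla_Neg[OF M] max_consistent_Neg[OF M] by blast
  finally show ?case .
next
  case (Bullet a)
  note M = Bullet.prems
  have "sat canonical_states canonical_rel canonical_val M (Bullet a) \<longleftrightarrow>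
      a \<in> M \<and> Box a \<notin> M"
    using Bullet canonical_Box[OF M, of a] by (auto simp: canonical_states_def)
  also have "\<dots> \<longleftrightarrow> Bullet a \<in> M"
    using max_consistent_Box[OF M] max_consistent_Bullet[OF M] by blast
  finally show ?case .
qed

lemma peval_sat: "peval (sat W R V s) a \<longleftrightarrow> sat W R V s a"
  by (induction a) auto

lemma sat_Conj_list: "sat W R V s (Conj_list as) \<longleftrightarrow> (\<forall>a\<in>set as. sat W R V s a)"
  using peval_sat[of W R V s] peval_Conj_list[of "sat W R V s"] by metis

lemma thmT_valid_reflexive:
  "thmT a \<Longrightarrow> reflexive_frame W R \<Longrightarrow> s \<in> W \<Longrightarrow> sat W R V s a"
proof (induction a arbitrary: s rule: thmT.induct)
  case (A0 a)
  then show ?case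
    using peval_sat[of W R V s a] unfolding tautology_def by metis
next
  case (R3 a b)
  have "sat W R V t a \<longleftrightarrow> sat W R V t b" if "t \<in> W" for t
    using R3.IH[OF R3.prems(1) that] by (auto simp: fm_abbrev_defs)
  then show ?case
    by (simp add: fm_abbrev_defs cong: rev_conj_cong)
next
  case (R4 a b)
  have "sat W R V t a \<longleftrightarrow> sat W R V t b" if "t \<in> W" for t
    using R4.IH[OF R4.prems(1) that] by (auto simp: fm_abbrev_defs)
  with R4.prems(2) show ?case
    by (simp add: fm_abbrev_defs cong: rev_conj_cong)
qed (simp add: fm_abbrev_defs reflexive_frame_def; blast)+

lemma derives_sound:
  assumes "derives \<Gamma> a"
  shows "refl_consequence TYPE('s) \<Gamma> a"
  unfolding refl_consequence_def
proof (intro allI impI ballI)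
  fix W :: "'s set" and R V s
  assume W: "reflexive_frame W R" "s \<in> W" and \<Gamma>: "\<forall>g\<in>\<Gamma>. sat W R V s g"
  obtain as where as: "set as \<subseteq> \<Gamma>" "thmT (Imp (Conj_list as) a)"
    using assms unfolding derives_def by blast
  have "sat W R V s (Imp (Conj_list as) a)"
    using thmT_valid_reflexive[OF as(2) W] .
  moreover have "sat W R V s (Conj_list as)"
    using as(1) \<Gamma> unfolding sat_Conj_list by blast
  ultimately show "sat W R V s a"
    by (simp add: Imp_def)
qed

lemma derives_complete:
  fixes \<Gamma> :: "'p fm set"
  assumes "refl_consequence TYPE('p fm set) \<Gamma> a"
  shows "derives \<Gamma> a"
proof (rule ccontr)
  assume "\<not> derives \<Gamma> a"
  then have "consistent (insert (Neg a) \<Gamma>)"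
    unfolding consistent_def using derives_by_contradiction by blast
  then obtain M where M: "insert (Neg a) \<Gamma> \<subseteq> M" "max_consistent M"
    by (rule Lindenbaum)
  have "M \<in> canonical_states"
    using M(2) by (simp add: canonical_states_def)
  then have "sat canonical_states canonical_rel canonical_val M a"
  proof (rule assms[unfolded refl_consequence_def, rule_format, OF canonical_reflexive])
    show "sat canonical_states canonical_rel canonical_val M g" if "g \<in> \<Gamma>" for g
      using M(1) that truth_lemma[OF M(2)] by blast
  qed
  with M show False
    using truth_lemma[OF M(2)] max_consistent_Neg[OF M(2)] by blast
qed

theorem theorem4:
  fixes \<Gamma> :: "'p fm set" and \<phi> :: "'p fm"
  shows "(derivesT \<Gamma> \<phi> \<longrightarrow> refl_consequence TYPE('s) \<Gamma> \<phi>)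
       \<and> (derivesT \<Gamma> \<phi> \<longleftrightarrow> refl_consequence TYPE('p fm set) \<Gamma> \<phi>)"
  unfolding derivesT_iff_derives
  using derives_sound[where 's = 's] derives_sound[where 's = "'p fm set"] derives_complete
  by blast

end
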